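(* Let $r$ be a parameter and let $H=(h_{n,k})_{n,k\ge0}$ be the exponential Riordan array $\left[e^x,x(1+rx/2)\right]$ (its $h$-matrix is $H$ itself). Let $\Gamma=(\gamma_{n,k})$ be its $\gamma$-matrix, and let $eF_r=H\cdot[e^x,x]$ be its $f$-matrix. Then, with ordinary generating functions $\sum_{n,k}a_{n,k}x^ny^k$: (i) the ordinary generating function of $\Gamma$ is $\mathcal{J}(1,1,1,\ldots;\, ry,2ry,3ry,\ldots)$; (ii) the ordinary generating function of $H$ is $\mathcal{J}(y+1,y+1,y+1,\ldots;\, ry,2ry,3ry,\ldots)$; (iii) the ordinary generating function of the reversal of $eF_r$ (the matrix with $(n,k)$ entry equal to the $(n,n-k)$ entry of $eF_r$) is $\mathcal{J}(2y+1,2y+1,2y+1,\ldots;\, ry(y+1),2ry(y+1),3ry(y+1),\ldots)$.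
   Context: An exponential Riordan array $[g(x),f(x)]$ is the lower-triangular matrix $(a_{n,k})_{n,k\ge0}$ with $a_{n,k}=\frac{n!}{k!}[x^n]g(x)f(x)^k$, where $g(0)=1$, $f(0)=0$, $f'(0)=1$; $[e^x,x]$ is the binomial matrix $\left(\binom{n}{k}\right)$. The matrix $H=\left[e^x,x(1+rx/2)\right]$ is Pascal-like: $h_{n,0}=h_{n,n}=1$ and $h_{n,n-k}=h_{n,k}$. Its $\gamma$-matrix $\Gamma=(\gamma_{n,k})_{0\le k\le \lfloor n/2\rfloor}$ is defined by $\sum_{k=0}^n h_{n,k}y^k=\sum_{k=0}^{\lfloor n/2\rfloor}\gamma_{n,k}\,y^k(1+y)^{n-2k}$ for all $n\ge0$. The $f$-matrix of $H$ is the product $H\cdot[e^x,x]$. The notation $\mathcal{J}(\alpha_1,\alpha_2,\ldots;\beta_1,\beta_2,\ldots)$ denotes the Jacobi continued fraction $\cfrac{1}{1-\alpha_1x-\cfrac{\beta_1x^2}{1-\alpha_2x-\cfrac{\beta_2x^2}{1-\cdots}}}$, a formal power series in $x$. *)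

theory Defs
  imports "HOL-Computational_Algebra.Computational_Algebra"
begin

text \<open>Infinite lower-triangular matrices are functions nat => nat => 'a.\<close>

definition exp_riordan :: "'a::field_char_0 fps \<Rightarrow> 'a fps \<Rightarrow> nat \<Rightarrow> nat \<Rightarrow> 'a" where
  "exp_riordan g f n k = fact n / fact k * fps_nth (g * f ^ k) n"

definition H_mat :: "'a::field_char_0 \<Rightarrow> nat \<Rightarrow> nat \<Rightarrow> 'a" where
  "H_mat r = exp_riordan (fps_exp 1) (fps_X * (1 + fps_const (r / 2) * fps_X))"

definition binom_mat :: "nat \<Rightarrow> nat \<Rightarrow> 'a::field_char_0" where
  "binom_mat = exp_riordan (fps_exp 1) fps_X"

text \<open>Product of lower-triangular matrices (the sum over j is finite since
  entry (n,j) vanishes for j > n).\<close>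
definition mat_mult :: "(nat \<Rightarrow> nat \<Rightarrow> 'a::comm_ring_1) \<Rightarrow> (nat \<Rightarrow> nat \<Rightarrow> 'a) \<Rightarrow> nat \<Rightarrow> nat \<Rightarrow> 'a" where
  "mat_mult A B n k = (\<Sum>j\<le>n. A n j * B j k)"

definition rev_mat :: "(nat \<Rightarrow> nat \<Rightarrow> 'a::zero) \<Rightarrow> nat \<Rightarrow> nat \<Rightarrow> 'a" where
  "rev_mat A n k = (if k \<le> n then A n (n - k) else 0)"

definition gamma_mat :: "(nat \<Rightarrow> nat \<Rightarrow> 'a::comm_ring_1) \<Rightarrow> nat \<Rightarrow> nat \<Rightarrow> 'a" where
  "gamma_mat h = (THE \<gamma>. \<forall>n.
      (\<forall>k. n div 2 < k \<longrightarrow> \<gamma> n k = 0) \<and>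
      (\<Sum>k\<le>n. monom (h n k) k) =
      (\<Sum>k\<le>n div 2. monom (\<gamma> n k) k * [:1, 1:] ^ (n - 2 * k)))"

text \<open>Ordinary generating function sum_{n,k} a(n,k) x^n y^k of a lower-triangular
  matrix, as a power series in x, with y specialised to a field element.\<close>
definition ogf :: "(nat \<Rightarrow> nat \<Rightarrow> 'a::comm_ring_1) \<Rightarrow> 'a \<Rightarrow> 'a fps" where
  "ogf A y = Abs_fps (\<lambda>n. \<Sum>k\<le>n. A n k * y ^ k)"

text \<open>Truncated Jacobi continued fraction: depth m, starting at level k
  (alpha and beta are indexed from 1).\<close>
fun jtail :: "(nat \<Rightarrow> 'a::field) \<Rightarrow> (nat \<Rightarrow> 'a) \<Rightarrow> nat \<Rightarrow> nat \<Rightarrow> 'a fps" where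
  "jtail \<alpha> \<beta> 0 k = 1"
| "jtail \<alpha> \<beta> (Suc m) k =
     inverse (1 - fps_const (\<alpha> k) * fps_X - fps_const (\<beta> k) * fps_X ^ 2 * jtail \<alpha> \<beta> m (Suc k))"

definition jfrac :: "(nat \<Rightarrow> 'a::field) \<Rightarrow> (nat \<Rightarrow> 'a) \<Rightarrow> 'a fps" where
  "jfrac \<alpha> \<beta> = (THE F. \<forall>n. \<exists>M. \<forall>m\<ge>M. fps_nth (jtail \<alpha> \<beta> m 1) n = fps_nth F n)"

end

theory Submission
  imports Defs
begin

(*
  Since h(n,k) = n!/k! [x^n] e^x (x (1 + r x/2))^k, the homogenised row polynomials
  sum_k h(n,k) s^k t^(n-k) have exponential generating function exp((s+t) x + r s t x^2/2):
  they are the moments mu_n(a, b) of a normal distribution with mean a = s + t and variance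
  b = r s t, characterised by mu_(n+2) = a mu_(n+1) + (n+1) b mu_n.  By Flajolet's reading of
  Jacobi continued fractions as generating functions of weighted Motzkin paths, mu_n(a, b) is
  the n-th coefficient of J(a, a, ...; b, 2b, 3b, ...).  Part (ii) is the case s = y, t = 1,
  and since the reversed f-matrix has row polynomials sum_i h(n,i) (y+1)^i y^(n-i), part (iii)
  is the case s = y + 1, t = y.  Finally mu_n(a, b) = sum_k m(n,k) a^(n-2k) b^k, where m(n,k)
  counts the k-edge matchings of an n-set; with a = 1 + y and b = r y this shows
  gamma(n,k) = m(n,k) r^k, and part (i) is the case a = 1, b = r y.
*)

definition fps_eq_upto :: "nat \<Rightarrow> 'a::comm_ring_1 fps \<Rightarrow> 'a fps \<Rightarrow> bool" where
  "fps_eq_upto N f g \<longleftrightarrow> (\<forall>n<N. f $ n = g $ n)"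

lemma fps_eq_upto_refl [simp]: "fps_eq_upto N f f"
  by (simp add: fps_eq_upto_def)

lemma fps_eq_upto_mono: "fps_eq_upto N f g \<Longrightarrow> M \<le> N \<Longrightarrow> fps_eq_upto M f g"
  by (auto simp: fps_eq_upto_def)

lemma fps_eq_upto_diff:
  "fps_eq_upto N f f' \<Longrightarrow> fps_eq_upto N g g' \<Longrightarrow> fps_eq_upto N (f - g) (f' - g')"
  by (auto simp: fps_eq_upto_def)

lemma fps_eq_upto_mult:
  "fps_eq_upto N f f' \<Longrightarrow> fps_eq_upto N g g' \<Longrightarrow> fps_eq_upto N (f * g) (f' * g')"
  unfolding fps_eq_upto_def fps_mult_nth by (auto intro!: sum.cong)

lemma fps_eq_upto_X_power_mult:
  "fps_eq_upto N f g \<Longrightarrow> fps_eq_upto (N + k) (fps_X ^ k * f) (fps_X ^ k * g)"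
  by (auto simp: fps_eq_upto_def fps_X_power_mult_nth)

lemma fps_eq_upto_inverse:
  fixes f g :: "'a::field fps"
  assumes fg: "fps_eq_upto N f g" and f0: "f $ 0 \<noteq> 0"
  shows "fps_eq_upto N (inverse f) (inverse g)"
proof (cases "N = 0")
  case False
  then have g0: "g $ 0 = f $ 0"
    using fg by (auto simp: fps_eq_upto_def)
  have "inverse f - inverse g = inverse f * (g - f) * inverse g"
    using f0 g0 by (simp add: algebra_simps inverse_mult_eq_1 inverse_mult_eq_1')
  moreover have "fps_eq_upto N (inverse f * (g - f) * inverse g) (inverse f * 0 * inverse g)"
    using fg by (intro fps_eq_upto_mult) (auto simp: fps_eq_upto_def)
  ultimately have "fps_eq_upto N (inverse f - inverse g) 0"
    by simp
  then show ?thesis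
    by (simp add: fps_eq_upto_def)
qed (simp add: fps_eq_upto_def)

lemma fps_eq_upto_compose_sum:
  fixes f g :: "'a::comm_ring_1 fps"
  assumes "g $ 0 = 0"
  shows "fps_eq_upto (Suc n) (f oo g) (\<Sum>i\<le>n. fps_const (f $ i) * g ^ i)"
  unfolding fps_eq_upto_def
proof (intro allI impI)
  fix j assume "j < Suc n"
  have "(\<Sum>i\<le>n. fps_const (f $ i) * g ^ i) $ j = (\<Sum>i\<le>n. f $ i * (g ^ i) $ j)"
    by (simp add: fps_sum_nth)
  also have "\<dots> = (\<Sum>i=0..j. f $ i * (g ^ i) $ j)"
    using \<open>j < Suc n\<close> startsby_zero_power_prefix[OF assms]
    by (intro sum.mono_neutral_right) auto
  finally show "(f oo g) $ j = (\<Sum>i\<le>n. fps_const (f $ i) * g ^ i) $ j"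
    by (simp add: fps_compose_nth)
qed

section \<open>Jacobi continued fractions\<close>

definition jfrac_step :: "(nat \<Rightarrow> 'a::field) \<Rightarrow> (nat \<Rightarrow> 'a) \<Rightarrow> nat \<Rightarrow> 'a fps \<Rightarrow> 'a fps" where
  "jfrac_step \<alpha> \<beta> k F =
     inverse (1 - fps_const (\<alpha> k) * fps_X - fps_const (\<beta> k) * fps_X ^ 2 * F)"

lemma jtail_Suc_eq_jfrac_step: "jtail \<alpha> \<beta> (Suc m) k = jfrac_step \<alpha> \<beta> k (jtail \<alpha> \<beta> m (Suc k))"
  by (simp add: jfrac_step_def)

declare jtail.simps(2) [simp del]

lemma jfrac_step_denominator_nth_0:
  fixes \<alpha> \<beta> :: "nat \<Rightarrow> 'a::field"
  shows "(1 - fps_const (\<alpha> k) * fps_X - fps_const (\<beta> k) * fps_X ^ 2 * F) $ 0 = 1"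
  by (simp add: fps_X_power_mult_nth power2_eq_square mult.assoc)

lemma fps_eq_upto_jfrac_step:
  assumes "fps_eq_upto N F G"
  shows "fps_eq_upto (N + 2) (jfrac_step \<alpha> \<beta> k F) (jfrac_step \<alpha> \<beta> k G)"
proof -
  have "fps_eq_upto (N + 2) (fps_const (\<beta> k) * (fps_X ^ 2 * F)) (fps_const (\<beta> k) * (fps_X ^ 2 * G))"
    using assms by (intro fps_eq_upto_mult fps_eq_upto_X_power_mult) auto
  then show ?thesis
    unfolding jfrac_step_def
    by (intro fps_eq_upto_inverse fps_eq_upto_diff)
       (auto simp: mult.assoc jfrac_step_denominator_nth_0)
qed

lemma fps_eq_upto_jtail:
  "m \<le> m' \<Longrightarrow> fps_eq_upto m (jtail \<alpha> \<beta> m k) (jtail \<alpha> \<beta> m' k)"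
proof (induction m arbitrary: k m')
  case (Suc m)
  then obtain m'' where m': "m' = Suc m''" "m \<le> m''"
    by (cases m') auto
  with Suc.IH have "fps_eq_upto (m + 2) (jfrac_step \<alpha> \<beta> k (jtail \<alpha> \<beta> m (Suc k)))
      (jfrac_step \<alpha> \<beta> k (jtail \<alpha> \<beta> m'' (Suc k)))"
    by (intro fps_eq_upto_jfrac_step) auto
  then show ?case
    unfolding m' jtail_Suc_eq_jfrac_step by (rule fps_eq_upto_mono) simp
qed (simp add: fps_eq_upto_def)

text \<open>The continued fraction from level \<open>k\<close> on; its \<open>n\<close>-th coefficient is already
  fixed by the truncation of depth \<open>n + 1\<close>.\<close>
definition jfrac_tail :: "(nat \<Rightarrow> 'a::field) \<Rightarrow> (nat \<Rightarrow> 'a) \<Rightarrow> nat \<Rightarrow> 'a fps" where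
  "jfrac_tail \<alpha> \<beta> k = Abs_fps (\<lambda>n. jtail \<alpha> \<beta> (Suc n) k $ n)"

lemma fps_eq_upto_jfrac_tail: "fps_eq_upto m (jfrac_tail \<alpha> \<beta> k) (jtail \<alpha> \<beta> m k)"
  unfolding fps_eq_upto_def jfrac_tail_def
  using fps_eq_upto_jtail[of "Suc _" m \<alpha> \<beta> k] by (auto simp: fps_eq_upto_def)

lemma jfrac_eq_jfrac_tail: "jfrac \<alpha> \<beta> = jfrac_tail \<alpha> \<beta> 1"
  unfolding jfrac_def
proof (rule the_equality)
  show "\<forall>n. \<exists>M. \<forall>m\<ge>M. jtail \<alpha> \<beta> m 1 $ n = jfrac_tail \<alpha> \<beta> 1 $ n"
    using fps_eq_upto_jfrac_tail[of _ \<alpha> \<beta> 1] by (metis Suc_le_eq fps_eq_upto_def)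
next
  fix F assume F: "\<forall>n. \<exists>M. \<forall>m\<ge>M. jtail \<alpha> \<beta> m 1 $ n = F $ n"
  show "F = jfrac_tail \<alpha> \<beta> 1"
  proof (rule fps_ext)
    fix n
    obtain M where "\<forall>m\<ge>M. jtail \<alpha> \<beta> m 1 $ n = F $ n"
      using F by blast
    then show "F $ n = jfrac_tail \<alpha> \<beta> 1 $ n"
      using fps_eq_upto_jfrac_tail[of "max M (Suc n)" \<alpha> \<beta> 1] by (simp add: fps_eq_upto_def)
  qed
qed

lemma jfrac_tail_nth_0: "jfrac_tail \<alpha> \<beta> k $ 0 = 1"
  by (simp add: jfrac_tail_def jtail_Suc_eq_jfrac_step jfrac_step_def jfrac_step_denominator_nth_0)

lemma jfrac_tail_eq_step: "jfrac_tail \<alpha> \<beta> k = jfrac_step \<alpha> \<beta> k (jfrac_tail \<alpha> \<beta> (Suc k))"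
proof (rule fps_ext)
  fix n
  have "fps_eq_upto (n + 2) (jfrac_step \<alpha> \<beta> k (jfrac_tail \<alpha> \<beta> (Suc k))) (jtail \<alpha> \<beta> (Suc n) k)"
    unfolding jtail_Suc_eq_jfrac_step by (intro fps_eq_upto_jfrac_step fps_eq_upto_jfrac_tail)
  with fps_eq_upto_jfrac_tail[of "Suc n" \<alpha> \<beta> k]
  show "jfrac_tail \<alpha> \<beta> k $ n = jfrac_step \<alpha> \<beta> k (jfrac_tail \<alpha> \<beta> (Suc k)) $ n"
    by (simp add: fps_eq_upto_def)
qed

lemma jfrac_tail_fixpoint:
  "jfrac_tail \<alpha> \<beta> k = 1 + fps_const (\<alpha> k) * fps_X * jfrac_tail \<alpha> \<beta> k
     + fps_const (\<beta> k) * fps_X ^ 2 * jfrac_tail \<alpha> \<beta> k * jfrac_tail \<alpha> \<beta> (Suc k)"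
proof -
  let ?D = "1 - fps_const (\<alpha> k) * fps_X - fps_const (\<beta> k) * fps_X ^ 2 * jfrac_tail \<alpha> \<beta> (Suc k)"
  have "jfrac_tail \<alpha> \<beta> k * ?D = 1"
    by (subst jfrac_tail_eq_step)
       (simp add: jfrac_step_def inverse_mult_eq_1 jfrac_step_denominator_nth_0)
  then show ?thesis
    by (simp add: algebra_simps)
qed

fun jfrac_descent :: "(nat \<Rightarrow> 'a::field) \<Rightarrow> (nat \<Rightarrow> 'a) \<Rightarrow> nat \<Rightarrow> 'a fps" where
  "jfrac_descent \<alpha> \<beta> 0 = 1"
| "jfrac_descent \<alpha> \<beta> (Suc k) = fps_X * jfrac_descent \<alpha> \<beta> k * jfrac_tail \<alpha> \<beta> (Suc k)"

lemma jfrac_descent_nth_0: "jfrac_descent \<alpha> \<beta> k $ 0 = (if k = 0 then 1 else 0)"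
  by (cases k) auto

lemma jfrac_descent_recurrence:
  "jfrac_descent \<alpha> \<beta> k * jfrac_tail \<alpha> \<beta> (Suc k) = jfrac_descent \<alpha> \<beta> k
     + fps_const (\<alpha> (Suc k)) * fps_X * (jfrac_descent \<alpha> \<beta> k * jfrac_tail \<alpha> \<beta> (Suc k))
     + fps_const (\<beta> (Suc k)) * fps_X * (jfrac_descent \<alpha> \<beta> (Suc k) * jfrac_tail \<alpha> \<beta> (Suc (Suc k)))"
  by (subst jfrac_tail_fixpoint) (simp add: algebra_simps power2_eq_square)

text \<open>Flajolet's combinatorial reading: \<open>P n k\<close> is the total weight of the Motzkin paths of
  length \<open>n\<close> from height \<open>k\<close> down to \<open>0\<close>, where a level step at height \<open>j\<close> weighs
  \<open>\<alpha> (j + 1)\<close>, an up step from height \<open>j\<close> weighs \<open>\<beta> (j + 1)\<close> and a down step weighs \<open>1\<close>.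
  By first-passage decomposition their generating function is
  \<open>jfrac_descent \<alpha> \<beta> k * jfrac_tail \<alpha> \<beta> (Suc k)\<close>.\<close>
lemma jfrac_nth_eq_paths:
  fixes P :: "nat \<Rightarrow> nat \<Rightarrow> 'a::field"
  assumes P_0: "\<And>k. P 0 k = (if k = 0 then 1 else 0)"
    and P_Suc: "\<And>n k. P (Suc n) k =
      (if k = 0 then 0 else P n (k - 1)) + \<alpha> (Suc k) * P n k + \<beta> (Suc k) * P n (Suc k)"
  shows "jfrac \<alpha> \<beta> $ n = P n 0"
proof -
  have "(jfrac_descent \<alpha> \<beta> k * jfrac_tail \<alpha> \<beta> (Suc k)) $ n = P n k" for k
  proof (induction n arbitrary: k)
    case 0
    show ?case
      by (simp add: P_0 jfrac_descent_nth_0 jfrac_tail_nth_0)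
  next
    case (Suc n)
    have "jfrac_descent \<alpha> \<beta> k $ Suc n = (if k = 0 then 0 else P n (k - 1))"
      using Suc.IH by (cases k) (auto simp: mult.assoc)
    then show ?case
      by (subst jfrac_descent_recurrence) (simp add: mult.assoc Suc.IH P_Suc del: jfrac_descent.simps)
  qed
  from this[of 0] show ?thesis
    by (simp add: jfrac_eq_jfrac_tail)
qed

section \<open>Gaussian moments\<close>

text \<open>The \<open>n\<close>-th moment of the normal distribution with mean \<open>a\<close> and variance \<open>b\<close>.\<close>
fun gauss_moment :: "'a::comm_ring_1 \<Rightarrow> 'a \<Rightarrow> nat \<Rightarrow> 'a" where
  "gauss_moment a b 0 = 1"
| "gauss_moment a b (Suc 0) = a"
| "gauss_moment a b (Suc (Suc n)) =
     a * gauss_moment a b (Suc n) + of_nat (Suc n) * b * gauss_moment a b n"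

lemma gauss_moment_Suc:
  "gauss_moment a b (Suc m) = a * gauss_moment a b m + of_nat m * b * gauss_moment a b (m - 1)"
  by (cases m) auto

lemma Suc_Suc_mult_choose_Suc_Suc:
  "Suc (Suc k) * (n choose Suc (Suc k)) = (n - Suc k) * (n choose Suc k)"
  using binomial_absorption[of "Suc k" n] binomial_absorb_comp[of n "Suc k"] by simp

lemma choose_mult_gauss_moment_recurrence:
  fixes a b :: "'a::comm_ring_1"
  shows "of_nat (n choose Suc j) * gauss_moment a b (n - j) =
    a * (of_nat (n choose Suc j) * gauss_moment a b (n - Suc j)) +
    of_nat (Suc (Suc j)) * b * (of_nat (n choose Suc (Suc j)) * gauss_moment a b (n - Suc (Suc j)))"
proof (cases "j < n")
  case True
  have absorb: "of_nat (Suc (Suc j)) * of_nat (n choose Suc (Suc j)) =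
      (of_nat (n - Suc j) * of_nat (n choose Suc j) :: 'a)"
    by (metis Suc_Suc_mult_choose_Suc_Suc of_nat_mult)
  from True have "gauss_moment a b (n - j) =
      a * gauss_moment a b (n - Suc j) + of_nat (n - Suc j) * b * gauss_moment a b (n - Suc (Suc j))"
    using gauss_moment_Suc[of a b "n - Suc j"] by (simp add: Suc_diff_Suc)
  then have "of_nat (n choose Suc j) * gauss_moment a b (n - j) =
      a * (of_nat (n choose Suc j) * gauss_moment a b (n - Suc j)) +
      (of_nat (n - Suc j) * of_nat (n choose Suc j)) * (b * gauss_moment a b (n - Suc (Suc j)))"
    by (simp add: algebra_simps)
  also have "\<dots> = a * (of_nat (n choose Suc j) * gauss_moment a b (n - Suc j)) +
      (of_nat (Suc (Suc j)) * of_nat (n choose Suc (Suc j))) * (b * gauss_moment a b (n - Suc (Suc j)))"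
    by (simp only: absorb)
  finally show ?thesis
    by (simp add: algebra_simps)
qed (simp add: binomial_eq_0)

text \<open>The path weights are \<open>P n k = (n choose k) * gauss_moment a b (n - k)\<close>.\<close>
lemma jfrac_const_linear_nth:
  fixes a b :: "'a::field_char_0"
  shows "jfrac (\<lambda>_. a) (\<lambda>k. of_nat k * b) $ n = gauss_moment a b n"
proof -
  define P where "P n k = of_nat (n choose k) * gauss_moment a b (n - k)" for n k
  have P_Suc: "P (Suc n) k =
    (if k = 0 then 0 else P n (k - 1)) + a * P n k + of_nat (Suc k) * b * P n (Suc k)" for n k
  proof (cases k)
    case 0
    then show ?thesis
      by (simp add: P_def gauss_moment_Suc algebra_simps)
  next
    case (Suc j)
    then show ?thesis
      using choose_mult_gauss_moment_recurrence[of n j a b] by (simp add: P_def algebra_simps)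
  qed
  have "jfrac (\<lambda>_. a) (\<lambda>k. of_nat k * b) $ n = P n 0"
    by (rule jfrac_nth_eq_paths) (simp add: P_def, rule P_Suc)
  then show ?thesis
    by (simp add: P_def)
qed

lemma fact_mult_nth_eq_gauss_moment:
  fixes W :: "'a::field_char_0 fps"
  assumes W_0: "W $ 0 = 1"
    and W_deriv: "fps_deriv W = (fps_const a + fps_const b * fps_X) * W"
  shows "fact n * W $ n = gauss_moment a b n"
proof -
  have W_Suc: "of_nat (Suc n) * W $ Suc n = a * W $ n + (if n = 0 then 0 else b * W $ (n - 1))" for n
    using arg_cong[OF W_deriv, of "\<lambda>F. F $ n"] by (simp add: distrib_right mult.assoc del: of_nat_Suc)
  show ?thesis
  proof (induction n rule: induct_nat_012)
    case (ge2 n)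
    have "fact (Suc (Suc n)) * W $ Suc (Suc n) =
        (fact (Suc n) :: 'a) * (of_nat (Suc (Suc n)) * W $ Suc (Suc n))"
      by (simp add: algebra_simps del: of_nat_Suc)
    also have "\<dots> = a * (fact (Suc n) * W $ Suc n) + of_nat (Suc n) * b * (fact n * W $ n)"
      using W_Suc[of "Suc n"] by (simp add: algebra_simps del: of_nat_Suc)
    finally show ?case
      using ge2 by simp
  qed (use W_0 W_Suc[of 0] in simp_all)
qed

fun matchings :: "nat \<Rightarrow> nat \<Rightarrow> nat" where
  "matchings 0 k = (if k = 0 then 1 else 0)"
| "matchings (Suc 0) k = (if k = 0 then 1 else 0)"
| "matchings (Suc (Suc n)) k =
     matchings (Suc n) k + (case k of 0 \<Rightarrow> 0 | Suc j \<Rightarrow> Suc n * matchings n j)"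

lemma matchings_eq_0: "n < 2 * k \<Longrightarrow> matchings n k = 0"
  by (induction n k rule: matchings.induct) (auto split: nat.split)

lemma sum_matchings_atMost_eq:
  fixes f :: "nat \<Rightarrow> 'a::comm_ring_1"
  assumes "n \<le> N"
  shows "(\<Sum>k\<le>N. of_nat (matchings n k) * f k) = (\<Sum>k\<le>n. of_nat (matchings n k) * f k)"
  by (rule sum.mono_neutral_right) (use assms in \<open>auto simp: matchings_eq_0\<close>)

lemma gauss_moment_eq_sum_matchings:
  fixes a b :: "'a::comm_ring_1"
  shows "gauss_moment a b n = (\<Sum>k\<le>n. of_nat (matchings n k) * (a ^ (n - 2 * k) * b ^ k))"
proof (induction n rule: induct_nat_012)
  case (ge2 n)
  have unmatched_last: "(\<Sum>k\<le>Suc (Suc n). of_nat (matchings (Suc n) k) * (a ^ (Suc (Suc n) - 2 * k) * b ^ k))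
      = a * gauss_moment a b (Suc n)"
  proof -
    have "of_nat (matchings (Suc n) k) * a ^ (Suc (Suc n) - 2 * k)
        = a * (of_nat (matchings (Suc n) k) * a ^ (Suc n - 2 * k))" for k
      by (cases "2 * k \<le> Suc n") (auto simp: matchings_eq_0 Suc_diff_le)
    then have "(\<Sum>k\<le>Suc (Suc n). of_nat (matchings (Suc n) k) * (a ^ (Suc (Suc n) - 2 * k) * b ^ k))
        = a * (\<Sum>k\<le>Suc (Suc n). of_nat (matchings (Suc n) k) * (a ^ (Suc n - 2 * k) * b ^ k))"
      unfolding sum_distrib_left by (simp add: ac_simps)
    also have "\<dots> = a * gauss_moment a b (Suc n)"
      by (subst sum_matchings_atMost_eq) (simp_all add: ge2.IH)
    finally show ?thesis .
  qed
  have matched_last: "(\<Sum>k\<le>Suc (Suc n). of_nat (case k of 0 \<Rightarrow> 0 | Suc j \<Rightarrow> Suc n * matchings n j)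
      * (a ^ (Suc (Suc n) - 2 * k) * b ^ k)) = of_nat (Suc n) * b * gauss_moment a b n"
  proof -
    have "(\<Sum>k\<le>Suc (Suc n). of_nat (case k of 0 \<Rightarrow> 0 | Suc j \<Rightarrow> Suc n * matchings n j)
        * (a ^ (Suc (Suc n) - 2 * k) * b ^ k))
        = of_nat (Suc n) * b * (\<Sum>k\<le>Suc n. of_nat (matchings n k) * (a ^ (n - 2 * k) * b ^ k))"
      unfolding sum_distrib_left
      by (subst sum.atMost_Suc_shift) (simp add: algebra_simps del: sum.atMost_Suc)
    also have "\<dots> = of_nat (Suc n) * b * gauss_moment a b n"
      by (subst sum_matchings_atMost_eq) (simp_all add: ge2.IH del: of_nat_Suc)
    finally show ?thesis .
  qed
  show ?case
    using unmatched_last matched_last by (simp add: sum.distrib distrib_right del: of_nat_Suc)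
qed simp_all

section \<open>Rows of \<open>H\<close>\<close>

lemma fps_X_power_mult_nth_compose_linear:
  fixes \<phi> :: "'a::comm_ring_1 fps"
  assumes "k \<le> n"
  shows "t ^ (n - k) * (fps_X ^ k * \<phi>) $ n = (fps_X ^ k * (\<phi> oo (fps_const t * fps_X))) $ n"
  using assms by (simp add: fps_X_power_mult_nth fps_compose_linear)

lemma exp_mult_power_nth_scale:
  fixes c t :: "'a::field_char_0"
  assumes "k \<le> n"
  shows "t ^ (n - k) * (fps_exp 1 * (fps_X * (1 + fps_const c * fps_X)) ^ k) $ n
       = (fps_exp t * (fps_X * (1 + fps_const (c * t) * fps_X)) ^ k) $ n"
proof -
  have tX_0: "(fps_const t * fps_X) $ 0 = 0"
    by simp
  have "(1 + fps_const c * fps_X) oo (fps_const t * fps_X) = 1 + fps_const (c * t) * fps_X"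
    by (simp add: fps_compose_add_distrib fps_compose_mult_distrib[OF tX_0] mult.assoc[symmetric])
  then have "(fps_exp 1 * (1 + fps_const c * fps_X) ^ k) oo (fps_const t * fps_X)
      = fps_exp t * (1 + fps_const (c * t) * fps_X) ^ k"
    by (simp only: fps_compose_mult_distrib[OF tX_0] fps_compose_power[OF tX_0, symmetric]
        fps_exp_compose_linear mult_1_right)
  then show ?thesis
    using fps_X_power_mult_nth_compose_linear[OF assms, of t "fps_exp 1 * (1 + fps_const c * fps_X) ^ k"]
    by (simp add: power_mult_distrib mult.left_commute)
qed

lemma H_mat_homogeneous_row_sum:
  fixes r s t :: "'a::field_char_0"
  shows "(\<Sum>k\<le>n. H_mat r n k * s ^ k * t ^ (n - k)) = gauss_moment (s + t) (r * s * t) n"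
proof -
  define u :: "'a fps" where "u = fps_X * (1 + fps_const (r / 2 * t) * fps_X)"
  define W where "W = fps_exp t * (fps_exp 1 oo (fps_const s * u))"
  have su_0: "(fps_const s * u) $ 0 = 0"
    by (simp add: u_def)
  have entry: "H_mat r n k * s ^ k * t ^ (n - k) = fact n * (s ^ k / fact k * (fps_exp t * u ^ k) $ n)"
    if "k \<le> n" for k
  proof -
    have "H_mat r n k * s ^ k * t ^ (n - k) = fact n / fact k * s ^ k *
        (t ^ (n - k) * (fps_exp 1 * (fps_X * (1 + fps_const (r / 2) * fps_X)) ^ k) $ n)"
      by (simp add: H_mat_def exp_riordan_def)
    then show ?thesis
      unfolding u_def exp_mult_power_nth_scale[OF that] by simp
  qed
  have scaled_term: "fps_exp t * (fps_const (fps_exp 1 $ k) * (fps_const s * u) ^ k)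
      = fps_const (s ^ k / fact k) * (fps_exp t * u ^ k)" for k
    by (simp add: power_mult_distrib fps_const_power mult_ac flip: fps_const_mult)
  have "(\<Sum>k\<le>n. H_mat r n k * s ^ k * t ^ (n - k))
      = fact n * (fps_exp t * (\<Sum>k\<le>n. fps_const (fps_exp 1 $ k) * (fps_const s * u) ^ k)) $ n"
    by (simp add: entry scaled_term sum_distrib_left fps_sum_nth del: fps_exp_nth)
  also have "\<dots> = fact n * W $ n"
    using fps_eq_upto_mult[OF fps_eq_upto_refl fps_eq_upto_compose_sum[OF su_0], of n "fps_exp t"]
    by (simp add: W_def fps_eq_upto_def)
  also have "\<dots> = gauss_moment (s + t) (r * s * t) n"
  proof (rule fact_mult_nth_eq_gauss_moment)
    show "W $ 0 = 1"
      by (simp add: W_def)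
    have "fps_deriv (fps_exp 1 oo (fps_const s * u)) =
        (fps_exp 1 oo (fps_const s * u)) * (fps_const s * fps_deriv u)"
      by (simp add: fps_compose_deriv[OF su_0])
    then have "fps_deriv W = (fps_const t + fps_const s * fps_deriv u) * W"
      by (simp add: W_def algebra_simps)
    also have "fps_const t + fps_const s * fps_deriv u = fps_const (s + t) + fps_const (r * s * t) * fps_X"
      by (simp add: u_def fps_eq_iff fps_X_nth fps_numeral_nth algebra_simps)
    finally show "fps_deriv W = (fps_const (s + t) + fps_const (r * s * t) * fps_X) * W" .
  qed
  finally show ?thesis .
qed

section \<open>The \<open>\<gamma>\<close>-matrix of \<open>H\<close>\<close>

lemma sum_monom_mult_eq_0D:
  fixes c :: "nat \<Rightarrow> 'a::comm_ring_1"
  assumes sum_eq_0: "(\<Sum>j\<le>m. monom (c j) j * p j) = 0"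
    and p_0: "\<And>j. j \<le> m \<Longrightarrow> coeff (p j) 0 = 1"
    and "k \<le> m"
  shows "c k = 0"
  using \<open>k \<le> m\<close>
proof (induction k rule: less_induct)
  case (less k)
  have "0 = coeff (\<Sum>j\<le>m. monom (c j) j * p j) k"
    by (simp add: sum_eq_0)
  also have "\<dots> = (\<Sum>j\<le>m. if k < j then 0 else c j * coeff (p j) (k - j))"
    by (simp add: coeff_sum coeff_monom_mult)
  also have "\<dots> = (\<Sum>j\<le>m. if j = k then c k else 0)"
  proof (rule sum.cong)
    fix j assume "j \<in> {..m}"
    with less p_0 show "(if k < j then 0 else c j * coeff (p j) (k - j)) = (if j = k then c k else 0)"
      by (cases j k rule: linorder_cases) auto
  qed simp
  also have "\<dots> = c k"
    using less.prems by simp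
  finally show ?case
    by simp
qed

lemma gamma_mat_eqI:
  fixes h \<gamma> :: "nat \<Rightarrow> nat \<Rightarrow> 'a::comm_ring_1"
  assumes \<gamma>_eq_0: "\<And>n k. n div 2 < k \<Longrightarrow> \<gamma> n k = 0"
    and h_eq: "\<And>n. (\<Sum>k\<le>n. monom (h n k) k) =
      (\<Sum>k\<le>n div 2. monom (\<gamma> n k) k * [:1, 1:] ^ (n - 2 * k))"
  shows "gamma_mat h = \<gamma>"
  unfolding gamma_mat_def
proof (rule the_equality)
  fix \<gamma>' assume \<gamma>': "\<forall>n. (\<forall>k. n div 2 < k \<longrightarrow> \<gamma>' n k = 0) \<and>
    (\<Sum>k\<le>n. monom (h n k) k) = (\<Sum>k\<le>n div 2. monom (\<gamma>' n k) k * [:1, 1:] ^ (n - 2 * k))"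
  show "\<gamma>' = \<gamma>"
  proof (intro ext)
    fix n k
    have "(\<Sum>j\<le>n div 2. monom (\<gamma>' n j - \<gamma> n j) j * [:1, 1:] ^ (n - 2 * j)) = 0"
      using \<gamma>' h_eq[of n] by (simp add: sum_subtractf diff_monom[symmetric] left_diff_distrib)
    then have "k \<le> n div 2 \<Longrightarrow> \<gamma>' n k - \<gamma> n k = 0"
      by (rule sum_monom_mult_eq_0D) (simp add: coeff_0_power)
    with \<gamma>' \<gamma>_eq_0[of n k] show "\<gamma>' n k = \<gamma> n k"
      by (cases "k \<le> n div 2") auto
  qed
qed (use assms in auto)

lemma gamma_mat_H_mat:
  fixes r :: "'a::field_char_0"
  shows "gamma_mat (H_mat r) = (\<lambda>n k. of_nat (matchings n k) * r ^ k)"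
proof (rule gamma_mat_eqI)
  fix n k :: nat
  assume "n div 2 < k"
  then show "of_nat (matchings n k) * r ^ k = 0"
    by (simp add: matchings_eq_0)
next
  fix n
  show "(\<Sum>k\<le>n. monom (H_mat r n k) k) =
      (\<Sum>k\<le>n div 2. monom (of_nat (matchings n k) * r ^ k) k * [:1, 1:] ^ (n - 2 * k))"
  proof (rule poly_eq_poly_eq_iff[THEN iffD1], rule ext)
    fix y :: 'a
    have "poly (\<Sum>k\<le>n. monom (H_mat r n k) k) y = gauss_moment (y + 1) (r * y) n"
      using H_mat_homogeneous_row_sum[of r n y 1] by (simp add: poly_sum poly_monom)
    also have "\<dots> = (\<Sum>k\<le>n div 2. of_nat (matchings n k) * ((y + 1) ^ (n - 2 * k) * (r * y) ^ k))"
      unfolding gauss_moment_eq_sum_matchings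
      by (rule sum.mono_neutral_right) (auto simp: matchings_eq_0)
    also have "\<dots> = poly (\<Sum>k\<le>n div 2. monom (of_nat (matchings n k) * r ^ k) k * [:1, 1:] ^ (n - 2 * k)) y"
      by (simp add: poly_sum poly_monom poly_power power_mult_distrib ac_simps)
    finally show "poly (\<Sum>k\<le>n. monom (H_mat r n k) k) y =
        poly (\<Sum>k\<le>n div 2. monom (of_nat (matchings n k) * r ^ k) k * [:1, 1:] ^ (n - 2 * k)) y" .
  qed
qed

section \<open>Generating functions\<close>

lemma ogf_nth: "ogf A y $ n = (\<Sum>k\<le>n. A n k * y ^ k)"
  by (simp add: ogf_def)

lemma ogf_gamma_mat_H_mat:
  fixes r y :: "'a::field_char_0"
  shows "ogf (gamma_mat (H_mat r)) y = jfrac (\<lambda>_. 1) (\<lambda>k. of_nat k * r * y)"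
proof (rule fps_ext)
  fix n
  have "ogf (gamma_mat (H_mat r)) y $ n = gauss_moment 1 (r * y) n"
    by (simp add: ogf_nth gamma_mat_H_mat gauss_moment_eq_sum_matchings power_mult_distrib ac_simps)
  then show "ogf (gamma_mat (H_mat r)) y $ n = jfrac (\<lambda>_. 1) (\<lambda>k. of_nat k * r * y) $ n"
    by (simp add: jfrac_const_linear_nth mult.assoc)
qed

lemma ogf_H_mat:
  fixes r y :: "'a::field_char_0"
  shows "ogf (H_mat r) y = jfrac (\<lambda>_. y + 1) (\<lambda>k. of_nat k * r * y)"
proof (rule fps_ext)
  fix n
  have "ogf (H_mat r) y $ n = gauss_moment (y + 1) (r * y) n"
    using H_mat_homogeneous_row_sum[of r n y 1] by (simp add: ogf_nth)
  then show "ogf (H_mat r) y $ n = jfrac (\<lambda>_. y + 1) (\<lambda>k. of_nat k * r * y) $ n"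
    by (simp add: jfrac_const_linear_nth mult.assoc)
qed

lemma binom_mat_eq: "binom_mat i j = (of_nat (i choose j) :: 'a::field_char_0)"
  by (cases "j \<le> i")
     (simp_all add: binom_mat_def exp_riordan_def fps_X_power_mult_right_nth binomial_fact)

lemma sum_choose_diff_mult_power:
  fixes y :: "'a::comm_ring_1"
  assumes "i \<le> n"
  shows "(\<Sum>k\<le>n. of_nat (i choose (n - k)) * y ^ k) = (y + 1) ^ i * y ^ (n - i)"
proof -
  have "(\<Sum>k\<le>n. of_nat (i choose (n - k)) * y ^ k) = (\<Sum>l\<le>n. of_nat (i choose l) * y ^ (n - l))"
    by (rule sum.reindex_bij_witness[where i="\<lambda>k. n - k" and j="\<lambda>k. n - k"]) auto
  also have "\<dots> = (\<Sum>l\<le>i. of_nat (i choose l) * y ^ (n - l))"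
    by (rule sum.mono_neutral_right) (use assms in \<open>auto simp: binomial_eq_0 not_le\<close>)
  also have "\<dots> = (\<Sum>l\<le>i. of_nat (i choose l) * y ^ (i - l)) * y ^ (n - i)"
    unfolding sum_distrib_right
    by (intro sum.cong refl) (use assms in \<open>simp add: mult.assoc flip: power_add\<close>)
  also have "\<dots> = (y + 1) ^ i * y ^ (n - i)"
    by (subst add.commute) (simp add: binomial_ring)
  finally show ?thesis .
qed

lemma ogf_rev_mat_f_matrix:
  fixes r y :: "'a::field_char_0"
  shows "ogf (rev_mat (mat_mult (H_mat r) binom_mat)) y =
           jfrac (\<lambda>_. 2 * y + 1) (\<lambda>k. of_nat k * r * y * (y + 1))"
proof (rule fps_ext)
  fix n
  have "ogf (rev_mat (mat_mult (H_mat r) binom_mat)) y $ n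
      = (\<Sum>k\<le>n. (\<Sum>i\<le>n. H_mat r n i * of_nat (i choose (n - k))) * y ^ k)"
    by (simp add: ogf_nth rev_mat_def mat_mult_def binom_mat_eq)
  also have "\<dots> = (\<Sum>i\<le>n. H_mat r n i * (\<Sum>k\<le>n. of_nat (i choose (n - k)) * y ^ k))"
    unfolding sum_distrib_left sum_distrib_right by (subst sum.swap) (simp add: mult.assoc)
  also have "\<dots> = (\<Sum>i\<le>n. H_mat r n i * (y + 1) ^ i * y ^ (n - i))"
    by (simp add: sum_choose_diff_mult_power mult.assoc)
  also have "\<dots> = gauss_moment (2 * y + 1) (r * y * (y + 1)) n"
    using H_mat_homogeneous_row_sum[of r n "y + 1" y] by (simp add: ac_simps)
  finally show "ogf (rev_mat (mat_mult (H_mat r) binom_mat)) y $ n =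
      jfrac (\<lambda>_. 2 * y + 1) (\<lambda>k. of_nat k * r * y * (y + 1)) $ n"
    by (simp add: jfrac_const_linear_nth mult.assoc)
qed

theorem proposition4:
  fixes r y :: "'a::field_char_0"
  shows "ogf (gamma_mat (H_mat r)) y = jfrac (\<lambda>_. 1) (\<lambda>k. of_nat k * r * y) \<and>
         ogf (H_mat r) y = jfrac (\<lambda>_. y + 1) (\<lambda>k. of_nat k * r * y) \<and>
         ogf (rev_mat (mat_mult (H_mat r) binom_mat)) y =
           jfrac (\<lambda>_. 2 * y + 1) (\<lambda>k. of_nat k * r * y * (y + 1))"
  using ogf_gamma_mat_H_mat ogf_H_mat ogf_rev_mat_f_matrix by blast

end
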